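(* Let $K$ and $L$ be compact convex subsets of $\mathbb{R}^n$, and let $1 \leq d \leq n$. The following are equivalent: (i) For every polytope $Q \subseteq K$ having at most $d+1$ vertices, there exists $v \in \mathbb{R}^n$ such that $Q + v \subseteq L$. (ii) For every $d$-dimensional linear subspace $\xi$ of $\mathbb{R}^n$, there exists $v \in \xi$ such that $K_\xi + v \subseteq L_\xi$.
   Context: For a set $S\subseteq\mathbb{R}^n$ and a linear subspace $\xi$, $S_\xi$ denotes the orthogonal projection of $S$ onto $\xi$. Named in the paper the "Generalized Inscribed Polytope Containment Theorem". *)

theory Defs
  imports "HOL-Analysis.Analysis"
begin

text \<open>Orthogonal projection of a point onto a linear subspace xi: the unique
  point p of xi with x - p orthogonal to xi (well defined for linear subspaces
  of a Euclidean space).\<close>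
definition orth_proj :: "'a::euclidean_space set \<Rightarrow> 'a \<Rightarrow> 'a" where
  "orth_proj xi x = (THE p. p \<in> xi \<and> (\<forall>y\<in>xi. (x - p) \<bullet> y = 0))"

definition proj_set :: "'a::euclidean_space set \<Rightarrow> 'a set \<Rightarrow> 'a set" where
  "proj_set xi S = orth_proj xi ` S"

end

theory Submission
  imports Defs
begin

text \<open>
  (i) \<Longrightarrow> (ii): with P the projection onto \<open>\<xi>\<close>, the sets \<open>P(L) - P k\<close> for \<open>k \<in> K\<close> are
  compact convex subsets of the \<open>d\<close>-dimensional space \<open>\<xi>\<close>; any \<open>d + 1\<close> of them meet, because
  the convex hull of the corresponding points of K translates into L. Helly's theorem in \<open>\<xi>\<close>
  and compactness give a common point v, which is the required translation.

  (ii) \<Longrightarrow> (i): Q is the convex hull of its vertex set E. Choose c minimising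
  \<open>\<Sum>q\<in>E. infdist (q + c) L\<^sup>2\<close>; at the minimum the residuals \<open>r q = closest_point L (q + c) - (q + c)\<close>
  sum to zero, so they span a space of dimension at most \<open>card E - 1 \<le> d\<close>, contained in some
  \<open>d\<close>-dimensional \<open>\<xi>\<close>. Projecting onto \<open>\<xi>\<close> does not change inner products with the \<open>r q\<close>, so the
  translation v from (ii) together with the obtuse-angle property of the nearest point gives
  \<open>\<Sum>q\<in>E. norm (r q)\<^sup>2 \<le> (\<Sum>q\<in>E. r q) \<bullet> (v - c) = 0\<close>. Hence \<open>E + c \<subseteq> L\<close>, and so \<open>Q + c \<subseteq> L\<close>.
\<close>

lemma orth_proj_ex1:
  fixes X :: "'a::euclidean_space set"
  assumes "subspace X"
  shows "\<exists>!p. p \<in> X \<and> (\<forall>y\<in>X. (x - p) \<bullet> y = 0)"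
proof -
  obtain p z where p: "p \<in> span X" "\<And>w. w \<in> span X \<Longrightarrow> orthogonal z w" "x = p + z"
    using orthogonal_subspace_decomp_exists by metis
  have "p \<in> X" using assms p(1) span_eq_iff by blast
  moreover have "(x - p) \<bullet> y = 0" if "y \<in> X" for y
    using p(2,3) that span_base by (fastforce simp: orthogonal_def)
  ultimately have "p \<in> X \<and> (\<forall>y\<in>X. (x - p) \<bullet> y = 0)" by blast
  moreover have "q = p" if q: "q \<in> X" "\<forall>y\<in>X. (x - q) \<bullet> y = 0" and "p \<in> X" "\<forall>y\<in>X. (x - p) \<bullet> y = 0" for q p
  proof -
    have "q - p \<in> X" using that assms subspace_diff by blast
    then have "(x - p) \<bullet> (q - p) - (x - q) \<bullet> (q - p) = 0" using that by simp
    then have "(q - p) \<bullet> (q - p) = 0" by (simp add: inner_diff_left)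
    then show "q = p" by simp
  qed
  ultimately show ?thesis by blast
qed

lemma orth_proj_in:
  assumes "subspace X"
  shows "orth_proj X x \<in> X"
  using theI'[OF orth_proj_ex1[OF assms, of x]] unfolding orth_proj_def by blast

lemma inner_orth_proj:
  assumes "subspace X" "y \<in> X"
  shows "orth_proj X x \<bullet> y = x \<bullet> y"
  using theI'[OF orth_proj_ex1[OF assms(1), of x]] assms(2)
  unfolding orth_proj_def by (simp add: inner_diff_left)

lemma orth_proj_unique:
  assumes "subspace X" "p \<in> X" "\<And>y. y \<in> X \<Longrightarrow> p \<bullet> y = x \<bullet> y"
  shows "orth_proj X x = p"
  unfolding orth_proj_def
  by (rule the1_equality[OF orth_proj_ex1[OF assms(1)]]) (simp add: assms inner_diff_left)

lemma linear_orth_proj: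
  assumes "subspace X"
  shows "linear (orth_proj X)"
proof (rule linearI)
  show "orth_proj X (x + y) = orth_proj X x + orth_proj X y" for x y
    by (rule orth_proj_unique)
      (simp_all add: assms subspace_add orth_proj_in inner_add_left inner_orth_proj)
  show "orth_proj X (c *\<^sub>R x) = c *\<^sub>R orth_proj X x" for c x
    by (rule orth_proj_unique)
      (simp_all add: assms subspace_scale orth_proj_in inner_orth_proj)
qed

lemma Inter_nonempty_if_affine_dependent_witnesses:
  fixes \<F> :: "'a::euclidean_space set set"
  assumes "finite \<F>" "\<And>S. S \<in> \<F> \<Longrightarrow> convex S"
    and X: "\<And>S T. S \<in> \<F> \<Longrightarrow> T \<in> \<F> \<Longrightarrow> S \<noteq> T \<Longrightarrow> X T \<in> S"
    and "affine_dependent (X ` \<F>)"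
  shows "\<Inter>\<F> \<noteq> {}"
proof -
  from Radon_partition[OF finite_imageI[OF assms(1)] assms(4)]
  obtain M P where MP: "M \<inter> P = {}" "M \<union> P = X ` \<F>" "convex hull M \<inter> convex hull P \<noteq> {}"
    by (elim exE conjE)
  then obtain p where p: "p \<in> convex hull M" "p \<in> convex hull P" by blast
  \<comment> \<open>The part of the Radon partition not containing the witness of S lies in S.\<close>
  have "p \<in> S" if S: "S \<in> \<F>" for S
  proof -
    have "M \<subseteq> S \<or> P \<subseteq> S"
    proof (cases "X S \<in> M")
      case True
      then have "P \<subseteq> X ` (\<F> - {S})" using MP(1,2) by blast
      then show ?thesis using S X by blast
    next
      case False
      then have "M \<subseteq> X ` (\<F> - {S})" using MP(2) by auto
      then show ?thesis using S X by blast
    qed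
    then show ?thesis
      using p hull_minimal[of _ S convex] assms(2)[OF S] by blast
  qed
  then show ?thesis by blast
qed

lemma Helly_in_subspace_finite:
  fixes \<F> :: "'a::euclidean_space set set"
  assumes "finite \<F>" "\<And>S. S \<in> \<F> \<Longrightarrow> convex S" "\<And>S. S \<in> \<F> \<Longrightarrow> S \<subseteq> V" "dim V \<le> d"
    and "\<And>\<T>. \<T> \<subseteq> \<F> \<Longrightarrow> card \<T> \<le> d + 1 \<Longrightarrow> \<Inter>\<T> \<noteq> {}"
  shows "\<Inter>\<F> \<noteq> {}"
  using assms
proof (induction "card \<F>" arbitrary: \<F> rule: less_induct)
  case less
  show ?case
  proof (cases "card \<F> \<le> d + 1")
    case True
    then show ?thesis using less.prems by blast
  next
    case False
    have "\<Inter>(\<F> - {S}) \<noteq> {}" if "S \<in> \<F>" for S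
    proof (rule less.hyps)
      show "card (\<F> - {S}) < card \<F>" using card_Diff1_less less.prems(1) that .
      show "\<Inter>\<T> \<noteq> {}" if "\<T> \<subseteq> \<F> - {S}" "card \<T> \<le> d + 1" for \<T>
        using less.prems(5) that by blast
    qed (use less.prems in simp_all)
    then have "\<forall>S\<in>\<F>. \<exists>x. x \<in> \<Inter>(\<F> - {S})" by blast
    then obtain X where "\<And>S. S \<in> \<F> \<Longrightarrow> X S \<in> \<Inter>(\<F> - {S})"
      by metis
    then have X: "X T \<in> S" if "S \<in> \<F>" "T \<in> \<F>" "S \<noteq> T" for S T
      using that by blast
    show ?thesis
    proof (cases "inj_on X \<F>")
      case False
      then obtain S T where ST: "S \<in> \<F>" "T \<in> \<F>" "S \<noteq> T" "X S = X T"
        by (auto simp: inj_on_def)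
      have "X S \<in> U" if "U \<in> \<F>" for U
        using X[OF that ST(1)] X[OF that ST(2)] ST(3,4) by (cases "U = S") auto
      then show ?thesis by blast
    next
      case True
      have "X ` \<F> \<subseteq> V"
      proof
        fix y assume "y \<in> X ` \<F>"
        then obtain S where S: "S \<in> \<F>" "y = X S" by blast
        have "card (\<F> - {S}) \<noteq> 0" using False less.prems(1) S(1) by simp
        then have "\<F> - {S} \<noteq> {}" by (metis card.empty)
        then obtain T where "T \<in> \<F>" "T \<noteq> S" by blast
        then show "y \<in> V" using S X less.prems(3) by blast
      qed
      then have "dim (X ` \<F>) \<le> d" using dim_subset less.prems(4) by (meson order_trans)
      then have "affine_dependent (X ` \<F>)"
        using False less.prems(1) card_image[OF True]
        by (intro affine_dependent_biggerset_general) auto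
      with less.prems(1,2) X show ?thesis
        by (rule Inter_nonempty_if_affine_dependent_witnesses)
    qed
  qed
qed

lemma Helly_in_subspace_compact:
  fixes A :: "'i \<Rightarrow> 'a::euclidean_space set"
  assumes "I \<noteq> {}" "\<And>i. i \<in> I \<Longrightarrow> compact (A i)" "\<And>i. i \<in> I \<Longrightarrow> convex (A i)"
    and "\<And>i. i \<in> I \<Longrightarrow> A i \<subseteq> V" "dim V \<le> d"
    and "\<And>J. J \<subseteq> I \<Longrightarrow> finite J \<Longrightarrow> card J \<le> d + 1 \<Longrightarrow> (\<Inter>i\<in>J. A i) \<noteq> {}"
  shows "(\<Inter>i\<in>I. A i) \<noteq> {}"
proof -
  obtain i0 where i0: "i0 \<in> I" using assms(1) by blast
  have "A i0 \<inter> (\<Inter>i\<in>I. A i) \<noteq> {}"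
  proof (rule compact_imp_fip_image)
    show "compact (A i0)" using assms(2) i0 .
    show "closed (A i)" if "i \<in> I" for i
      using assms(2)[OF that] compact_imp_closed by blast
    fix J assume J: "finite J" "J \<subseteq> I"
    have "\<Inter>(A ` insert i0 J) \<noteq> {}"
    proof (rule Helly_in_subspace_finite)
      show "\<Inter>\<T> \<noteq> {}" if \<T>: "\<T> \<subseteq> A ` insert i0 J" "card \<T> \<le> d + 1" for \<T>
      proof -
        obtain J' where J': "J' \<subseteq> insert i0 J" "inj_on A J'" "\<T> = A ` J'"
          using subset_image_inj[THEN iffD1, OF \<T>(1)] by (elim exE conjE)
        then have "finite J'" using J(1) finite_subset by blast
        moreover have "card J' \<le> d + 1" using J'(2,3) \<T>(2) by (simp add: card_image)
        moreover have "J' \<subseteq> I" using J'(1) J(2) i0 by blast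
        ultimately show ?thesis using assms(6) J'(3) by simp
      qed
      show "finite (A ` insert i0 J)" using J(1) by simp
      show "convex S" "S \<subseteq> V" if S: "S \<in> A ` insert i0 J" for S
      proof -
        obtain i where "i \<in> I" "S = A i" using S J(2) i0 by blast
        then show "convex S" "S \<subseteq> V" using assms(3,4) by simp_all
      qed
    qed (rule assms(5))
    then show "A i0 \<inter> (\<Inter>i\<in>J. A i) \<noteq> {}" by simp
  qed
  then show ?thesis by blast
qed

lemma projection_translate_if_hulls_translate:
  fixes K L :: "'a::euclidean_space set"
  assumes "compact L" "convex L" "subspace xi" "dim xi = d"
    and hulls: "\<And>J. finite J \<Longrightarrow> J \<subseteq> K \<Longrightarrow> card J \<le> d + 1 \<Longrightarrow>
                  \<exists>v. (\<lambda>q. q + v) ` (convex hull J) \<subseteq> L"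
  shows "\<exists>v\<in>xi. (\<lambda>q. q + v) ` proj_set xi K \<subseteq> proj_set xi L"
proof (cases "K = {}")
  case True
  then show ?thesis using subspace_0[OF assms(3)] by (auto simp: proj_set_def)
next
  case False
  define P where "P = orth_proj xi"
  have P: "linear P" "\<And>x. P x \<in> xi"
    using assms(3) by (simp_all add: P_def linear_orth_proj orth_proj_in)
  define A where "A k = (\<lambda>l. l - P k) ` P ` L" for k
  have "(\<Inter>k\<in>K. A k) \<noteq> {}"
  proof (rule Helly_in_subspace_compact[OF False])
    show "compact (A k)" for k
      unfolding A_def using P(1) assms(1)
      by (intro compact_translation_subtract compact_continuous_image linear_continuous_on)
        (simp add: linear_conv_bounded_linear)
    show "convex (A k)" for k
      unfolding A_def using P(1) assms(2) by (simp add: convex_linear_image)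
    show "A k \<subseteq> xi" for k
      unfolding A_def using P(2) subspace_diff[OF assms(3)] by blast
    show "(\<Inter>k\<in>J. A k) \<noteq> {}" if J: "J \<subseteq> K" "finite J" "card J \<le> d + 1" for J
    proof -
      obtain v where v: "(\<lambda>q. q + v) ` (convex hull J) \<subseteq> L"
        using hulls J by blast
      have "P v \<in> A k" if "k \<in> J" for k
      proof -
        have "P (k + v) \<in> P ` L" using v hull_inc[OF that] by blast
        then show ?thesis unfolding A_def linear_add[OF P(1)]
          by (rule rev_image_eqI) simp
      qed
      then show ?thesis by blast
    qed
  qed (use assms(4) in simp)
  then obtain v where v: "\<And>k. k \<in> K \<Longrightarrow> v \<in> A k" by blast
  have "v \<in> xi" using v False P(2) subspace_diff[OF assms(3)] unfolding A_def by blast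
  moreover have "P k + v \<in> P ` L" if "k \<in> K" for k
    using v[OF that] unfolding A_def by force
  ultimately show ?thesis unfolding proj_set_def P_def by blast
qed

lemma infdist_closest_point:
  fixes S :: "'a::euclidean_space set"
  assumes "closed S" "S \<noteq> {}"
  shows "infdist x S = dist x (closest_point S x)"
proof (rule antisym)
  show "infdist x S \<le> dist x (closest_point S x)"
    by (rule infdist_le[OF closest_point_in_set[OF assms]])
  obtain y where "y \<in> S" "infdist x S = dist x y"
    using infdist_attains_inf[OF assms] by blast
  then show "dist x (closest_point S x) \<le> infdist x S"
    using closest_point_le[OF assms(1)] by simp
qed

lemma sum_norm_diff_mean_sq:
  fixes u :: "'b \<Rightarrow> 'a::real_inner"
  assumes "finite E" "E \<noteq> {}"
  shows "(\<Sum>q\<in>E. (norm (u q - (1 / card E) *\<^sub>R (\<Sum>p\<in>E. u p)))\<^sup>2)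
           = (\<Sum>q\<in>E. (norm (u q))\<^sup>2) - (norm (\<Sum>q\<in>E. u q))\<^sup>2 / card E"
proof -
  define s where "s = (\<Sum>q\<in>E. u q)"
  define m where "m = real (card E)"
  have "m > 0" using assms by (simp add: m_def card_gt_0_iff)
  have "(norm (a - w))\<^sup>2 = (norm a)\<^sup>2 - 2 * (a \<bullet> w) + (norm w)\<^sup>2" for a w :: 'a
    by (simp add: power2_norm_eq_inner inner_diff_left inner_diff_right inner_commute)
  then have "(\<Sum>q\<in>E. (norm (u q - (1 / m) *\<^sub>R s))\<^sup>2)
      = (\<Sum>q\<in>E. (norm (u q))\<^sup>2) - 2 * (s \<bullet> ((1 / m) *\<^sub>R s)) + m * (norm ((1 / m) *\<^sub>R s))\<^sup>2"
    by (simp add: sum.distrib sum_subtractf s_def inner_sum_left sum_distrib_left m_def)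
  also have "\<dots> = (\<Sum>q\<in>E. (norm (u q))\<^sup>2) - (norm s)\<^sup>2 / m"
    using \<open>m > 0\<close> by (simp add: dot_square_norm power2_eq_square field_simps)
  finally show ?thesis by (simp add: s_def m_def)
qed

lemma dim_image_less_card_if_sum_zero:
  fixes u :: "'b \<Rightarrow> 'a::euclidean_space"
  assumes "finite E" "q0 \<in> E" "(\<Sum>q\<in>E. u q) = 0"
  shows "dim (u ` E) < card E"
proof -
  have "(\<Sum>q\<in>E. u q) = u q0 + (\<Sum>q\<in>E - {q0}. u q)"
    by (rule sum.remove[OF assms(1,2)])
  then have "u q0 = - (\<Sum>q\<in>E - {q0}. u q)"
    using assms(3) by (simp add: eq_neg_iff_add_eq_0)
  moreover have "(\<Sum>q\<in>E - {q0}. u q) \<in> span (u ` (E - {q0}))"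
    by (rule span_sum) (simp add: span_base)
  ultimately have q0_span: "u q0 \<in> span (u ` (E - {q0}))"
    by (simp add: span_neg)
  have "u ` E \<subseteq> span (u ` (E - {q0}))"
  proof
    fix y assume "y \<in> u ` E"
    then obtain q where "q \<in> E" "y = u q" by blast
    then show "y \<in> span (u ` (E - {q0}))"
      using q0_span by (cases "q = q0") (simp_all add: span_base)
  qed
  then have "dim (u ` E) \<le> card (u ` (E - {q0}))"
    using assms(1) by (simp add: dim_le_card)
  also have "\<dots> \<le> card (E - {q0})"
    using assms(1) by (simp add: card_image_le)
  also have "\<dots> < card E"
    using assms(1,2) by (rule card_Diff1_less)
  finally show ?thesis .
qed

lemma choose_subspace_containing:
  fixes S :: "'a::euclidean_space set"
  assumes "dim S \<le> n" "n \<le> DIM('a)"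
  obtains T where "subspace T" "S \<subseteq> T" "dim T = n"
proof -
  have "\<exists>T. subspace T \<and> S \<subseteq> T \<and> dim T = n"
    using assms
  proof (induction n)
    case 0
    then show ?case by (intro exI[of _ "{0}"]) auto
  next
    case (Suc n)
    show ?case
    proof (cases "dim S = Suc n")
      case True
      then show ?thesis by (intro exI[of _ "span S"]) (auto intro: span_base)
    next
      case False
      then obtain T where T: "subspace T" "S \<subseteq> T" "dim T = n"
        using Suc by auto
      have "\<not> UNIV \<subseteq> span T"
        using dim_subset[of UNIV "span T"] T(3) Suc.prems(2) by auto
      then obtain x where "x \<notin> span T" by blast
      then have "dim (span (insert x T)) = Suc n"
        by (simp add: dim_insert T(3))
      then show ?thesis
        using T(2) by (intro exI[of _ "span (insert x T)"]) (auto intro: span_base)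
    qed
  qed
  then show ?thesis using that by blast
qed

lemma inner_eq_of_translate_in_proj_set:
  assumes "subspace X" "u \<in> X" "orth_proj X x + v \<in> proj_set X L"
  obtains l where "l \<in> L" "u \<bullet> l = u \<bullet> (x + v)"
proof -
  obtain l where l: "l \<in> L" "orth_proj X l = orth_proj X x + v"
    using assms(3) unfolding proj_set_def by auto
  have "u \<bullet> l = orth_proj X l \<bullet> u"
    by (simp add: inner_orth_proj[OF assms(1,2)] inner_commute[of u l])
  also have "\<dots> = x \<bullet> u + v \<bullet> u"
    by (simp add: l(2) inner_add_left inner_orth_proj[OF assms(1,2)])
  also have "\<dots> = u \<bullet> (x + v)"
    by (simp add: inner_add_right inner_commute[of u x] inner_commute[of u v])
  finally show ?thesis using that l(1) by blast
qed

lemma norm_closest_point_residual_sq_le: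
  fixes L :: "'a::euclidean_space set"
  assumes "convex L" "closed L" "l \<in> L"
  shows "(norm (closest_point L y - y))\<^sup>2 \<le> (closest_point L y - y) \<bullet> (l - y)"
proof -
  define p where "p = closest_point L y"
  have "(y - p) \<bullet> (l - p) \<le> 0"
    unfolding p_def by (rule closest_point_dot[OF assms])
  then have "0 \<le> (p - y) \<bullet> (l - p)"
    by (simp add: inner_diff_left)
  also have "(p - y) \<bullet> (l - p) = (p - y) \<bullet> (l - y) - (norm (p - y))\<^sup>2"
    by (simp add: power2_norm_eq_inner inner_diff_right)
  finally show ?thesis by (simp add: p_def)
qed

lemma closest_point_residuals_sum_zero_if_no_descent:
  fixes E L :: "'a::euclidean_space set" and c :: 'a
  defines "s \<equiv> \<Sum>q\<in>E. closest_point L (q + c) - (q + c)"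
  assumes "finite E" "E \<noteq> {}" "closed L" "L \<noteq> {}"
    and no_descent: "(\<Sum>q\<in>E. (infdist (q + c) L)\<^sup>2)
                       \<le> (\<Sum>q\<in>E. (infdist (q + (c + (1 / card E) *\<^sub>R s)) L)\<^sup>2)"
  shows "s = 0"
proof -
  define r where "r q = closest_point L (q + c) - (q + c)" for q
  define m where "m = real (card E)"
  have "m > 0" using assms(2,3) by (simp add: m_def card_gt_0_iff)
  have "(\<Sum>q\<in>E. (norm (r q))\<^sup>2) = (\<Sum>q\<in>E. (infdist (q + c) L)\<^sup>2)"
    unfolding r_def infdist_closest_point[OF assms(4,5)]
    by (simp add: dist_norm norm_minus_commute)
  also have "\<dots> \<le> (\<Sum>q\<in>E. (infdist (q + (c + (1 / m) *\<^sub>R s)) L)\<^sup>2)"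
    using no_descent by (simp add: m_def)
  also have "\<dots> \<le> (\<Sum>q\<in>E. (norm (r q - (1 / m) *\<^sub>R s))\<^sup>2)"
  proof (rule sum_mono)
    fix q
    have "infdist (q + (c + (1 / m) *\<^sub>R s)) L \<le> dist (q + (c + (1 / m) *\<^sub>R s)) (closest_point L (q + c))"
      by (rule infdist_le[OF closest_point_in_set[OF assms(4,5)]])
    also have "\<dots> = norm (r q - (1 / m) *\<^sub>R s)"
      by (simp add: r_def dist_norm norm_minus_commute algebra_simps)
    finally show "(infdist (q + (c + (1 / m) *\<^sub>R s)) L)\<^sup>2 \<le> (norm (r q - (1 / m) *\<^sub>R s))\<^sup>2"
      by (simp add: infdist_nonneg power_mono)
  qed
  also have "\<dots> = (\<Sum>q\<in>E. (norm (r q))\<^sup>2) - (norm s)\<^sup>2 / m"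
    using sum_norm_diff_mean_sq[OF assms(2,3), of r] by (simp add: s_def r_def m_def)
  finally have "(norm s)\<^sup>2 \<le> 0"
    using \<open>m > 0\<close> by (simp add: divide_le_0_iff)
  then show ?thesis by simp
qed

lemma exists_translation_closest_point_residuals_sum_zero:
  fixes E L :: "'a::euclidean_space set"
  assumes "finite E" "compact L" "L \<noteq> {}"
  shows "\<exists>c. (\<Sum>q\<in>E. closest_point L (q + c) - (q + c)) = 0"
proof (cases "E = {}")
  case True
  then show ?thesis by simp
next
  case False
  have "closed L" using assms(2) by (rule compact_imp_closed)
  \<comment> \<open>C contains the descent point \<open>c + s / card E\<close> for every c, so a minimiser over C suffices.\<close>
  define C where "C = convex hull ((\<lambda>p. fst p - snd p) ` (L \<times> E))"
  have "compact C"
    unfolding C_def using compact_Times[OF assms(2) finite_imp_compact[OF assms(1)]]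
    by (intro compact_convex_hull compact_continuous_image) (auto intro!: continuous_intros)
  have "C \<noteq> {}" unfolding C_def using assms(3) False by auto
  define G where "G c = (\<Sum>q\<in>E. (infdist (q + c) L)\<^sup>2)" for c
  have "continuous_on C G" unfolding G_def by (intro continuous_intros)
  then obtain c where c_min: "\<And>y. y \<in> C \<Longrightarrow> G c \<le> G y"
    using continuous_attains_inf[OF \<open>compact C\<close> \<open>C \<noteq> {}\<close>] by blast
  define s where "s = (\<Sum>q\<in>E. closest_point L (q + c) - (q + c))"
  define m where "m = real (card E)"
  have "m > 0" using assms(1) False by (simp add: m_def card_gt_0_iff)
  have "c + (1 / m) *\<^sub>R s = (\<Sum>q\<in>E. (1 / m) *\<^sub>R (closest_point L (q + c) - q))"
    using \<open>m > 0\<close> assms(1) False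
    by (simp add: s_def m_def scaleR_sum_right[symmetric] sum_subtractf sum.distrib sum_constant_scaleR algebra_simps)
  also have "\<dots> \<in> C"
  proof (rule convex_sum[OF assms(1)])
    show "convex C" unfolding C_def by (rule convex_convex_hull)
    show "(\<Sum>q\<in>E. 1 / m) = 1" using \<open>m > 0\<close> by (simp add: m_def)
    show "closest_point L (q + c) - q \<in> C" if "q \<in> E" for q
      unfolding C_def using that closest_point_in_set[OF \<open>closed L\<close> assms(3)]
      by (intro hull_inc rev_image_eqI[of "(closest_point L (q + c), q)"]) auto
  qed (use \<open>m > 0\<close> in simp)
  finally have "G c \<le> G (c + (1 / m) *\<^sub>R s)" by (rule c_min)
  then have "s = 0"
    unfolding s_def G_def m_def
    by (rule closest_point_residuals_sum_zero_if_no_descent[OF assms(1) False \<open>closed L\<close> assms(3)])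
  then show ?thesis unfolding s_def by blast
qed

lemma hull_translate_if_projections_translate:
  fixes K L E :: "'a::euclidean_space set"
  assumes "compact L" "convex L" "d \<le> DIM('a)"
    and projections: "\<And>xi. subspace xi \<Longrightarrow> dim xi = d \<Longrightarrow>
                        \<exists>v\<in>xi. (\<lambda>q. q + v) ` proj_set xi K \<subseteq> proj_set xi L"
    and E: "finite E" "E \<subseteq> K" "card E \<le> d + 1"
  shows "\<exists>v. (\<lambda>q. q + v) ` (convex hull E) \<subseteq> L"
proof (cases "E = {}")
  case True
  then show ?thesis by simp
next
  case False
  then obtain q0 where "q0 \<in> E" by blast
  have "closed L" using assms(1) by (rule compact_imp_closed)
  have "L \<noteq> {}"
  proof -
    obtain xi :: "'a set" where "subspace xi" "dim xi = d"
      using choose_subspace_of_subspace[of d UNIV] assms(3) by auto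
    with projections obtain v where "(\<lambda>q. q + v) ` proj_set xi K \<subseteq> proj_set xi L"
      by blast
    then show ?thesis using \<open>q0 \<in> E\<close> E(2) by (auto simp: proj_set_def)
  qed
  obtain c where c: "(\<Sum>q\<in>E. closest_point L (q + c) - (q + c)) = 0"
    using exists_translation_closest_point_residuals_sum_zero[OF E(1) assms(1) \<open>L \<noteq> {}\<close>] by blast
  define r where "r q = closest_point L (q + c) - (q + c)" for q
  have "dim (r ` E) \<le> d"
    using dim_image_less_card_if_sum_zero[OF E(1) \<open>q0 \<in> E\<close>, of r] c E(3) by (simp add: r_def)
  then obtain xi where xi: "subspace xi" "r ` E \<subseteq> xi" "dim xi = d"
    using assms(3) by (rule choose_subspace_containing)
  then obtain v where v: "(\<lambda>q. q + v) ` proj_set xi K \<subseteq> proj_set xi L"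
    using projections by blast
  have r_sq: "(norm (r q))\<^sup>2 \<le> r q \<bullet> (v - c)" if "q \<in> E" for q
  proof -
    have "orth_proj xi q + v \<in> proj_set xi L"
      using v that E(2) unfolding proj_set_def by blast
    moreover have "r q \<in> xi" using xi(2) that by blast
    ultimately obtain l where l: "l \<in> L" "r q \<bullet> l = r q \<bullet> (q + v)"
      using inner_eq_of_translate_in_proj_set[OF xi(1)] by blast
    have "(norm (r q))\<^sup>2 \<le> r q \<bullet> (l - (q + c))"
      unfolding r_def by (rule norm_closest_point_residual_sq_le[OF assms(2) \<open>closed L\<close> l(1)])
    also have "\<dots> = r q \<bullet> (v - c)"
      using l(2) by (simp add: inner_diff_right inner_add_right)
    finally show ?thesis .
  qed
  have "(\<Sum>q\<in>E. (norm (r q))\<^sup>2) \<le> (\<Sum>q\<in>E. r q \<bullet> (v - c))"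
    using r_sq by (rule sum_mono)
  also have "\<dots> = (\<Sum>q\<in>E. r q) \<bullet> (v - c)"
    by (simp add: inner_sum_left)
  also have "\<dots> = 0"
    using c by (simp add: r_def)
  finally have "(\<Sum>q\<in>E. (norm (r q))\<^sup>2) = 0"
    by (intro antisym sum_nonneg) simp_all
  then have "r q = 0" if "q \<in> E" for q
    using sum_nonneg_eq_0_iff[OF E(1), of "\<lambda>q. (norm (r q))\<^sup>2"] that by simp
  then have "q + c \<in> L" if "q \<in> E" for q
    using closest_point_in_set[OF \<open>closed L\<close> \<open>L \<noteq> {}\<close>, of "q + c"] that
    by (simp add: r_def)
  then have "(\<lambda>q. c + q) ` E \<subseteq> L" by (auto simp: add.commute)
  then have "convex hull ((\<lambda>q. c + q) ` E) \<subseteq> L"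
    by (rule hull_minimal[where S = convex, OF _ assms(2)])
  then have "(\<lambda>q. c + q) ` (convex hull E) \<subseteq> L"
    by (simp only: convex_hull_translation)
  then show ?thesis by (intro exI[of _ c]) (simp add: add.commute)
qed

lemma card_extreme_points_convex_hull_le:
  fixes J :: "'a::euclidean_space set"
  assumes "finite J"
  shows "card {x. x extreme_point_of convex hull J} \<le> card J"
  using assms extreme_point_of_convex_hull by (intro card_mono) auto

lemma polytope_eq_convex_hull_extreme_points:
  fixes Q :: "'a::euclidean_space set"
  assumes "polytope Q"
  shows "convex hull {x. x extreme_point_of Q} = Q"
  using Krein_Milman_Minkowski[OF polytope_imp_compact[OF assms] polytope_imp_convex[OF assms]]
  by (rule sym)

theorem theorem2p3:
  fixes K L :: "'a::euclidean_space set" and d :: nat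
  assumes "compact K" "convex K" "compact L" "convex L"
    and "1 \<le> d" "d \<le> DIM('a)"
  shows "(\<forall>Q. polytope Q \<and> Q \<subseteq> K \<and> card {x. x extreme_point_of Q} \<le> d + 1
              \<longrightarrow> (\<exists>v. (\<lambda>q. q + v) ` Q \<subseteq> L))
     \<longleftrightarrow> (\<forall>xi. subspace xi \<and> dim xi = d
              \<longrightarrow> (\<exists>v\<in>xi. (\<lambda>q. q + v) ` proj_set xi K \<subseteq> proj_set xi L))"
proof
  assume polytopes: "\<forall>Q. polytope Q \<and> Q \<subseteq> K \<and> card {x. x extreme_point_of Q} \<le> d + 1
                       \<longrightarrow> (\<exists>v. (\<lambda>q. q + v) ` Q \<subseteq> L)"
  have hulls: "\<exists>v. (\<lambda>q. q + v) ` (convex hull J) \<subseteq> L"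
    if "finite J" "J \<subseteq> K" "card J \<le> d + 1" for J
    using polytopes polytope_convex_hull[OF that(1)] hull_minimal[of J K convex, OF that(2) assms(2)]
      le_trans[OF card_extreme_points_convex_hull_le[OF that(1)] that(3)]
    by blast
  show "\<forall>xi. subspace xi \<and> dim xi = d
          \<longrightarrow> (\<exists>v\<in>xi. (\<lambda>q. q + v) ` proj_set xi K \<subseteq> proj_set xi L)"
    using projection_translate_if_hulls_translate[OF assms(3,4) _ _ hulls] by blast
next
  assume "\<forall>xi. subspace xi \<and> dim xi = d
            \<longrightarrow> (\<exists>v\<in>xi. (\<lambda>q. q + v) ` proj_set xi K \<subseteq> proj_set xi L)"
  then have projections: "\<And>xi. subspace xi \<Longrightarrow> dim xi = d \<Longrightarrow>
                            \<exists>v\<in>xi. (\<lambda>q. q + v) ` proj_set xi K \<subseteq> proj_set xi L"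
    by blast
  have "\<exists>v. (\<lambda>q. q + v) ` Q \<subseteq> L"
    if Q: "polytope Q" "Q \<subseteq> K" "card {x. x extreme_point_of Q} \<le> d + 1" for Q
  proof -
    have "{x. x extreme_point_of Q} \<subseteq> K"
      using Q(2) by (auto simp: extreme_point_of_def)
    with Q show ?thesis
      using hull_translate_if_projections_translate[OF assms(3,4,6) projections]
        finite_polyhedron_extreme_points[OF polytope_imp_polyhedron]
        polytope_eq_convex_hull_extreme_points
      by metis
  qed
  then show "\<forall>Q. polytope Q \<and> Q \<subseteq> K \<and> card {x. x extreme_point_of Q} \<le> d + 1
               \<longrightarrow> (\<exists>v. (\<lambda>q. q + v) ` Q \<subseteq> L)"
    by blast
qed

end
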